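(* Let $G$ be a finite simple graph, $s\ge1$, and let $e_1,\dots,e_s$ and $f_1,\dots,f_s$ be two sequences of edges of $G$ (repetitions allowed) with $f_1\cdots f_s=e_1\cdots e_s$ as monomials. If vertices $u,v$ (possibly equal) are even-connected with respect to $e_1\cdots e_s$, then $u$ and $v$ are even-connected with respect to $f_1\cdots f_s$.
   Context: Edges $xy$ of $G$ are identified with monomials $xy$ in the polynomial ring on the vertices. Even-connection: vertices $u,v$ (possibly equal) are even-connected with respect to the sequence $e_1,\dots,e_s$ if there is a sequence of vertices $p_0,\dots,p_{2k+1}$, $k\geq1$ (vertices may repeat), with (1) $p_0=u$, $p_{2k+1}=v$; (2) for all $0\le l\le k-1$, $p_{2l+1}p_{2l+2}=e_i$ for some $i$; (3) for every $i$, $|\{l\ge0 : p_{2l+1}p_{2l+2}=e_i\}|\le|\{j: e_j=e_i\}|$; (4) for all $0\le r\le 2k$, $p_rp_{r+1}$ is an edge of $G$. *)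

theory Defs
  imports Main "HOL-Library.Multiset"
begin

definition simple_graph :: "'a set \<Rightarrow> 'a set set \<Rightarrow> bool" where
  "simple_graph V E \<longleftrightarrow> finite V \<and> (\<forall>e\<in>E. \<exists>x y. x \<noteq> y \<and> x \<in> V \<and> y \<in> V \<and> e = {x, y})"

text \<open>The monomial of an edge {x,y} is xy; a monomial is represented by the multiset
  of its variables (with multiplicity), so the product of a sequence of edges is
  the sum of the vertex multisets of the edges.\<close>
definition edge_monomial :: "'a set \<Rightarrow> 'a multiset" where
  "edge_monomial e = mset_set e"

definition seq_monomial :: "'a set list \<Rightarrow> 'a multiset" where
  "seq_monomial es = sum_list (map edge_monomial es)"

definition even_connected :: "'a set set \<Rightarrow> 'a set list \<Rightarrow> 'a \<Rightarrow> 'a \<Rightarrow> bool" where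
  "even_connected E es u v \<longleftrightarrow>
    (\<exists>(k::nat) (p::nat \<Rightarrow> 'a). k \<ge> 1 \<and> p 0 = u \<and> p (2*k+1) = v \<and>
       (\<forall>l<k. {p (2*l+1), p (2*l+2)} \<in> set es) \<and>
       (\<forall>e \<in> set es. card {l. l < k \<and> {p (2*l+1), p (2*l+2)} = e} \<le> count (mset es) e) \<and>
       (\<forall>r\<le>2*k. {p r, p (r+1)} \<in> E))"

end

theory Submission
  imports Defs
begin

text \<open>Along a walk $u = p_0, p_1, \dots, p_{2k+1} = v$ the odd steps (taken from the sequence)
  and the even steps $p_{2l+2}p_{2l+3}$ satisfy the telescoping identity
  $(\prod \text{odd steps}) \cdot v = (\prod \text{even steps}) \cdot p_1$. Replacing the used
  edges of the sequence by the even steps, even-connection of $u$ and $v$ thus amounts to: some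
  neighbour $w$ of $u$ divides the monomial $m$ and $m \cdot v = w \cdot g$ for a product $g$ of
  edges. Conversely, such an identity unwinds, one variable at a time, into an alternating walk
  from $w$ to $v$. The criterion depends on the sequence only through its monomial.\<close>

definition edges_monomial :: "'a set multiset \<Rightarrow> 'a multiset" where
  "edges_monomial F = \<Sum>\<^sub># (image_mset edge_monomial F)"

definition monomial_even_connected :: "'a set set \<Rightarrow> 'a multiset \<Rightarrow> 'a \<Rightarrow> 'a \<Rightarrow> bool" where
  "monomial_even_connected E M u v \<longleftrightarrow>
    (\<exists>w G. {u, w} \<in> E \<and> w \<in># M \<and> set_mset G \<subseteq> E \<and> edges_monomial G + {#w#} = M + {#v#})"

lemma edges_monomial_simps [simp]:
  "edges_monomial {#} = {#}"
  "edges_monomial (add_mset x F) = mset_set x + edges_monomial F"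
  "edges_monomial (F + G) = edges_monomial F + edges_monomial G"
  by (simp_all add: edges_monomial_def edge_monomial_def)

lemma seq_monomial_eq_edges_monomial: "seq_monomial es = edges_monomial (mset es)"
  by (induction es) (simp_all add: seq_monomial_def edge_monomial_def)

lemma mem_edges_monomial_iff: "w \<in># edges_monomial F \<longleftrightarrow> (\<exists>x\<in>#F. finite x \<and> w \<in> x)"
proof (induction F)
  case (add x F)
  have "w \<in># mset_set x \<longleftrightarrow> finite x \<and> w \<in> x"
    by (cases "finite x") simp_all
  with add show ?case by auto
qed simp

lemma card_2_obtain_other:
  assumes "card x = 2" and "w \<in> x"
  obtains q where "q \<noteq> w" and "x = {w, q}"
  using assms by (metis card_2_iff insert_commute insert_iff singletonD)

lemma count_mset_map_upt: "count (mset (map g [0..<k])) e = card {l. l < k \<and> g l = e}"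
proof (induction k)
  case (Suc k)
  have "{l. l < Suc k \<and> g l = e} = {l. l < k \<and> g l = e} \<union> (if g k = e then {k} else {})"
    by (auto simp: less_Suc_eq)
  with Suc show ?case by (auto simp: card_insert_if)
qed simp

lemma edges_monomial_walk_telescope:
  assumes "\<forall>r<2*k+1. p r \<noteq> p (Suc r)"
  shows "edges_monomial (mset (map (\<lambda>l. {p (2*l+1), p (2*l+2)}) [0..<k])) + {#p (2*k+1)#}
       = edges_monomial (mset (map (\<lambda>l. {p (2*l+2), p (2*l+3)}) [0..<k])) + {#p 1#}"
  using assms
proof (induction k)
  case (Suc k)
  have "p (2*k+1) \<noteq> p (2*k+2)" "p (2*k+2) \<noteq> p (2*k+3)"
    using Suc.prems[rule_format, of "2*k+1"] Suc.prems[rule_format, of "2*k+2"]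
    by (simp_all add: numeral_3_eq_3)
  with Suc show ?case by (simp add: add_ac numeral_3_eq_3)
qed simp

text \<open>Each step peels off the $F$-edge $\{w,q\}$ at $w$ and then a $G$-edge $\{q,w'\}$ at $q$,
  which restores the identity with $w'$ in place of $w$.\<close>

lemma alternating_walk_of_balance:
  fixes F G :: "'a set multiset"
  assumes "\<forall>x \<in># F + G. card x = 2"
    and "edges_monomial G + {#w#} = edges_monomial F + {#v#}"
    and "w \<in># edges_monomial F"
  shows "\<exists>k q. k \<ge> 1 \<and> q 0 = w \<and> q (2*k) = v
           \<and> mset (map (\<lambda>l. {q (2*l), q (2*l+1)}) [0..<k]) \<subseteq># F
           \<and> (\<forall>l<k. {q (2*l+1), q (2*l+2)} \<in># G)"
  using assms
proof (induction "size F" arbitrary: F G w rule: less_induct)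
  case less
  obtain x where x: "x \<in># F" "w \<in> x"
    using less.prems(3) by (auto simp: mem_edges_monomial_iff)
  then obtain q where q: "q \<noteq> w" "x = {w, q}"
    using less.prems(1) card_2_obtain_other by (metis union_iff)
  obtain F' where F: "F = add_mset x F'"
    using x(1) by (metis mset_add)
  have "edges_monomial G = add_mset q (edges_monomial F' + {#v#})"
    using less.prems(2) F q by simp
  then have "q \<in># edges_monomial G" by simp
  then obtain y where y: "y \<in># G" "q \<in> y"
    by (auto simp: mem_edges_monomial_iff)
  then obtain w' where w': "w' \<noteq> q" "y = {q, w'}"
    using less.prems(1) card_2_obtain_other by (metis union_iff)
  obtain G' where G: "G = add_mset y G'"
    using y(1) by (metis mset_add)
  have balance': "edges_monomial G' + {#w'#} = edges_monomial F' + {#v#}"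
    using less.prems(2) F G q w' by simp
  show ?case
  proof (cases "w' = v")
    case True
    let ?Q = "\<lambda>r::nat. if r = 0 then w else if r = 1 then q else v"
    have "mset (map (\<lambda>l. {?Q (2*l), ?Q (2*l+1)}) [0..<1]) \<subseteq># F" using F q by simp
    moreover have "{?Q 1, ?Q 2} \<in># G" using G w' True by simp
    ultimately show ?thesis by (intro exI[of _ 1] exI[of _ ?Q]) auto
  next
    case False
    then have "w' \<in># edges_monomial F'"
      using balance' by (metis add_mset_add_single insert_noteq_member)
    moreover have "size F' < size F" using F by simp
    moreover have "\<forall>x \<in># F' + G'. card x = 2" using less.prems(1) F G by auto
    ultimately obtain k q' where walk: "k \<ge> 1" "q' 0 = w'" "q' (2*k) = v"
        "mset (map (\<lambda>l. {q' (2*l), q' (2*l+1)}) [0..<k]) \<subseteq># F'"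
        "\<forall>l<k. {q' (2*l+1), q' (2*l+2)} \<in># G'"
      using less.hyps balance' by blast
    define Q where "Q = (\<lambda>r::nat. case r of 0 \<Rightarrow> w | Suc 0 \<Rightarrow> q | Suc (Suc r') \<Rightarrow> q' r')"
    have "map (\<lambda>l. {Q (2*l), Q (2*l+1)}) [0..<Suc k]
        = x # map (\<lambda>l. {q' (2*l), q' (2*l+1)}) [0..<k]"
      unfolding map_upt_Suc using q by (simp add: Q_def)
    then have "mset (map (\<lambda>l. {Q (2*l), Q (2*l+1)}) [0..<Suc k]) \<subseteq># F"
      using walk(4) F by simp
    moreover have "\<forall>l<Suc k. {Q (2*l+1), Q (2*l+2)} \<in># G"
    proof (intro allI impI)
      fix l assume "l < Suc k"
      then show "{Q (2*l+1), Q (2*l+2)} \<in># G"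
        using walk(2,5) G w' by (cases l) (simp_all add: Q_def)
    qed
    moreover have "Q 0 = w" "Q (2 * Suc k) = v" using walk(3) by (simp_all add: Q_def)
    ultimately show ?thesis by (intro exI[of _ "Suc k"] exI[of _ Q]) auto
  qed
qed

lemma even_connected_imp_monomial_even_connected:
  assumes edges: "\<forall>e\<in>E. card e = 2" and "set es \<subseteq> E"
    and "even_connected E es u v"
  shows "monomial_even_connected E (seq_monomial es) u v"
proof -
  obtain k :: nat and p where k: "k \<ge> 1" and ends: "p 0 = u" "p (2*k+1) = v"
    and odd_steps: "\<forall>l<k. {p (2*l+1), p (2*l+2)} \<in> set es"
    and counts: "\<forall>e \<in> set es. card {l. l < k \<and> {p (2*l+1), p (2*l+2)} = e} \<le> count (mset es) e"
    and steps: "\<forall>r\<le>2*k. {p r, p (r+1)} \<in> E"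
    using assms(3) unfolding even_connected_def by blast
  define A where "A = mset (map (\<lambda>l. {p (2*l+1), p (2*l+2)}) [0..<k])"
  define H where "H = mset (map (\<lambda>l. {p (2*l+2), p (2*l+3)}) [0..<k])"
  have "count A e \<le> count (mset es) e" for e
  proof (cases "e \<in> set es")
    case True
    then show ?thesis using counts unfolding A_def count_mset_map_upt by simp
  next
    case False
    then have "{l. l < k \<and> {p (2*l+1), p (2*l+2)} = e} = {}" using odd_steps by auto
    then show ?thesis unfolding A_def count_mset_map_upt by (simp only: card.empty)
  qed
  then have A_sub: "A \<subseteq># mset es" by (simp add: subseteq_mset_def)
  have "p r \<noteq> p (Suc r)" if "r < 2*k+1" for r
  proof -
    have "{p r, p (r+1)} \<in> E" using steps that by simp
    then have "card {p r, p (r+1)} = 2" using edges by blast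
    then show ?thesis by auto
  qed
  then have telescope: "edges_monomial A + {#v#} = edges_monomial H + {#p 1#}"
    using edges_monomial_walk_telescope[of k p, folded A_def H_def] ends(2) by blast
  define G where "G = H + (mset es - A)"
  have "edges_monomial (mset es) = edges_monomial A + edges_monomial (mset es - A)"
    using A_sub by (metis edges_monomial_simps(3) subset_mset.add_diff_inverse)
  then have balance: "edges_monomial G + {#p 1#} = seq_monomial es + {#v#}"
    using telescope by (simp add: G_def seq_monomial_eq_edges_monomial add_ac)
  have "set_mset H \<subseteq> E"
  proof
    fix x assume "x \<in># H"
    then obtain l where "l < k" "x = {p (2*l+2), p (2*l+3)}" by (auto simp: H_def)
    then show "x \<in> E" using steps[rule_format, of "2*l+2"] by (simp add: numeral_3_eq_3)
  qed
  then have "set_mset G \<subseteq> E" using assms(2) by (auto simp: G_def dest!: in_diffD)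
  moreover have "p 1 \<in># seq_monomial es"
  proof -
    have "{p 1, p 2} \<in> set es" using odd_steps[rule_format, of 0] k by (simp add: numeral_2_eq_2)
    then show ?thesis unfolding seq_monomial_eq_edges_monomial mem_edges_monomial_iff
      by (intro bexI[of _ "{p 1, p 2}"]) simp_all
  qed
  moreover have "{u, p 1} \<in> E" using steps[rule_format, of 0] ends(1) by simp
  ultimately show ?thesis using balance unfolding monomial_even_connected_def by blast
qed

lemma monomial_even_connected_imp_even_connected:
  assumes edges: "\<forall>e\<in>E. card e = 2" and "set fs \<subseteq> E"
    and "monomial_even_connected E (seq_monomial fs) u v"
  shows "even_connected E fs u v"
proof -
  obtain w G where uw: "{u, w} \<in> E" and w: "w \<in># edges_monomial (mset fs)"
    and G: "set_mset G \<subseteq> E" and balance: "edges_monomial G + {#w#} = edges_monomial (mset fs) + {#v#}"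
    using assms(3) unfolding monomial_even_connected_def seq_monomial_eq_edges_monomial by blast
  have "\<forall>x \<in># mset fs + G. card x = 2" using edges assms(2) G by auto
  then obtain k q where k: "k \<ge> 1" and ends: "q 0 = w" "q (2*k) = v"
      and fs_steps: "mset (map (\<lambda>l. {q (2*l), q (2*l+1)}) [0..<k]) \<subseteq># mset fs"
      and G_steps: "\<forall>l<k. {q (2*l+1), q (2*l+2)} \<in># G"
    using alternating_walk_of_balance[OF _ balance w] by blast
  define P where "P = (\<lambda>r::nat. case r of 0 \<Rightarrow> u | Suc r' \<Rightarrow> q r')"
  have fs_edge: "{q (2*l), q (2*l+1)} \<in># mset fs" if "l < k" for l
    using mset_subset_eqD[OF fs_steps] that by simp
  have "{P (2*l+1), P (2*l+2)} \<in> set fs" if "l < k" for l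
    using fs_edge[OF that] by (simp add: P_def)
  moreover have "card {l. l < k \<and> {P (2*l+1), P (2*l+2)} = e} \<le> count (mset fs) e" for e
  proof -
    have "card {l. l < k \<and> {P (2*l+1), P (2*l+2)} = e}
        = count (mset (map (\<lambda>l. {q (2*l), q (2*l+1)}) [0..<k])) e"
      unfolding count_mset_map_upt by (simp add: P_def)
    also have "\<dots> \<le> count (mset fs) e" by (rule mset_subset_eq_count[OF fs_steps])
    finally show ?thesis .
  qed
  moreover have "{P r, P (r+1)} \<in> E" if "r \<le> 2*k" for r
  proof (cases r)
    case 0
    then show ?thesis using uw ends(1) by (simp add: P_def)
  next
    case (Suc r')
    with that have "\<exists>l<k. r' = 2*l \<or> r' = 2*l+1" by presburger
    then obtain l where l: "l < k" and "r' = 2*l \<or> r' = 2*l+1" by blast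
    then consider "r' = 2*l" | "r' = 2*l+1" by blast
    then show ?thesis
    proof cases
      case 1
      then have "{P r, P (r+1)} = {q (2*l), q (2*l+1)}" using Suc by (simp add: P_def)
      with fs_edge[OF l] assms(2) show ?thesis by auto
    next
      case 2
      then have "{P r, P (r+1)} = {q (2*l+1), q (2*l+2)}" using Suc by (simp add: P_def)
      with G_steps l G show ?thesis by auto
    qed
  qed
  moreover have "P 0 = u" "P (2*k+1) = v" using ends by (simp_all add: P_def)
  ultimately show ?thesis unfolding even_connected_def using k by blast
qed

theorem theorem6p6:
  fixes V :: "'a set" and E :: "'a set set" and es fs :: "'a set list" and s :: nat and u v :: 'a
  assumes "simple_graph V E"
    and "s \<ge> 1" and "length es = s" and "length fs = s"
    and "set es \<subseteq> E" and "set fs \<subseteq> E"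
    and "seq_monomial fs = seq_monomial es"
    and "even_connected E es u v"
  shows "even_connected E fs u v"
proof -
  have edges: "\<forall>e\<in>E. card e = 2"
    using assms(1) unfolding simple_graph_def card_2_iff by blast
  have "monomial_even_connected E (seq_monomial es) u v"
    using even_connected_imp_monomial_even_connected[OF edges assms(5,8)] .
  then show ?thesis
    using monomial_even_connected_imp_even_connected[OF edges assms(6)] assms(7) by simp
qed

end
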